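(* Let $S$ be a semilattice and let $\psi:S\to\mathbb C$ satisfy $\operatorname{def}(\psi):=\sup_{x,y\in S}|\psi(x)\psi(y)-\psi(xy)|<1/5$. Let $S_1=\{e\in S:\ |\psi(e)-1|<7/25\}$ and let $\chi$ be the indicator function of $S_1$. Then $\chi:S\to\mathbb C$ is multiplicative (i.e. $\chi(xy)=\chi(x)\chi(y)$ for all $x,y\in S$) and $\sup_{e\in S}|\psi(e)-\chi(e)|\le\frac75\operatorname{def}(\psi)$.
   Context: A semilattice is a commutative semigroup in which every element is idempotent. *)

theory Defs
  imports "HOL-Analysis.Analysis" "HOL-Library.Extended_Real"
begin

text \<open>Defect of a map into the complex numbers, as an extended real supremum
(so that it is well defined even when unbounded).\<close>
definition defect :: "('a::times \<Rightarrow> complex) \<Rightarrow> ereal" where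
  "defect \<psi> = (SUP p\<in>(UNIV::('a \<times> 'a) set).
      ereal (cmod (\<psi> (fst p) * \<psi> (snd p) - \<psi> (fst p * snd p))))"

end

theory Submission
  imports Defs
begin

text \<open>
  Idempotence gives \<open>|\<psi>(e)| |\<psi>(e) - 1| = |\<psi>(e)\<^sup>2 - \<psi>(e)| \<le> d\<close>, where
  \<open>d < 1/5\<close> is the (finite, real) defect.  For a complex number \<open>z\<close> with
  \<open>|z| |z - 1| \<le> d < 1/5\<close> an elementary estimate shows a dichotomy: either
  \<open>|z - 1| < 7/25\<close> and then \<open>|z - 1| \<le> 7/5 d\<close>, or \<open>|z - 1| \<ge> 7/25\<close> and then
  \<open>|z| \<le> 7/5 d\<close>.  Hence \<open>\<psi>\<close> is uniformly \<open>7/5 d\<close>-close to the indicator \<open>\<chi>\<close> of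
  \<open>S\<^sub>1\<close>.  Moreover, values on \<open>S\<^sub>1\<close> have modulus \<open>> 18/25\<close>, values off \<open>S\<^sub>1\<close> have
  modulus \<open>\<le> 7/5 d < 7/25\<close>, and all values have modulus \<open>< 32/25\<close>; comparing
  \<open>\<psi>(xy)\<close> with \<open>\<psi>(x)\<psi>(y)\<close> then shows \<open>xy \<in> S\<^sub>1 \<longleftrightarrow> x \<in> S\<^sub>1 \<and> y \<in> S\<^sub>1\<close>,
  i.e. \<open>\<chi>\<close> is multiplicative.
\<close>

text \<open>Far from \<open>1\<close>, a small product \<open>|z| |z - 1|\<close> forces \<open>|z|\<close> to be small:
  first \<open>|z| < 5/7\<close>, then \<open>|z|(1 - |z|) < 1/5\<close> pushes \<open>|z|\<close> below the smaller
  root \<open>\<approx> 0.276\<close> of \<open>t\<^sup>2 - t + 1/5\<close>, so \<open>|z - 1| \<ge> 1 - |z| \<ge> 5/7\<close>.\<close>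
lemma almost_idempotent_far_from_one:
  fixes z :: complex and d :: real
  assumes prod: "cmod z * cmod (z - 1) \<le> d" and d: "d < 1/5"
    and far: "cmod (z - 1) \<ge> 7/25"
  shows "cmod z \<le> 7/5 * d"
proof -
  define a where "a = cmod z"
  define b where "b = cmod (z - 1)"
  have a0: "a \<ge> 0" and ab: "a * b \<le> d" and b_far: "b \<ge> 7/25"
    using prod far by (auto simp: a_def b_def)
  have b_ge: "b \<ge> 1 - a"
    using norm_triangle_ineq2[of 1 z] by (simp add: a_def b_def norm_minus_commute)
  have "a * (7/25) \<le> a * b" using a0 b_far by (intro mult_left_mono)
  hence a_lt: "a < 5/7" using ab d by linarith
  have "a * (1 - a) \<le> a * b" using a0 b_ge by (intro mult_left_mono)
  hence quad: "a * (1 - a) < 1/5" using ab d by linarith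
  have a_small: "a < 28/100"
  proof (rule ccontr)
    assume "\<not> a < 28/100"
    hence "(a - 28/100) * (5/7 - a) \<ge> 0" using a_lt by simp
    moreover have "a * (1 - a) - 1/5 = (a - 28/100) * (5/7 - a) + a * (1 - 5/7 - 28/100)"
      by (simp add: algebra_simps divide_simps)
    moreover have "a * (1 - 5/7 - 28/100) \<ge> 0" using a0 by simp
    ultimately show False using quad by linarith
  qed
  have "a * (5/7) \<le> a * b" using a0 a_small b_ge by (intro mult_left_mono) auto
  thus ?thesis using ab by (simp add: a_def)
qed

text \<open>Near \<open>1\<close>, \<open>|z| \<ge> 1 - |z - 1| > 18/25\<close>, so \<open>|z - 1| \<le> 25/18 d \<le> 7/5 d\<close>.\<close>
lemma almost_idempotent_near_one:
  fixes z :: complex and d :: real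
  assumes prod: "cmod z * cmod (z - 1) \<le> d"
    and near: "cmod (z - 1) < 7/25"
  shows "cmod (z - 1) \<le> 7/5 * d"
proof -
  have "cmod z \<ge> 1 - cmod (z - 1)"
    using norm_triangle_ineq4[of z "z - 1"] by simp
  hence "18/25 * cmod (z - 1) \<le> cmod z * cmod (z - 1)"
    using near by (intro mult_right_mono) auto
  hence "cmod (z - 1) \<le> 25/18 * d" using prod by linarith
  moreover have "d \<ge> 0" using prod by (metis mult_nonneg_nonneg norm_ge_zero order_trans)
  ultimately show ?thesis by linarith
qed

lemma near_one_norm_bounds:
  fixes z :: complex
  assumes "cmod (z - 1) < 7/25"
  shows "18/25 < cmod z" and "cmod z < 32/25"
  using assms norm_triangle_ineq4[of z "z - 1"] norm_triangle_ineq[of "z - 1" 1] by auto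

lemma defect_le: "ereal (cmod (\<psi> x * \<psi> y - \<psi> (x * y))) \<le> defect \<psi>"
  unfolding defect_def by (rule SUP_upper2[of "(x, y)"]) auto

lemma defect_real:
  assumes "defect \<psi> < ereal (1/5)"
  obtains d where "defect \<psi> = ereal d" "d < 1/5"
    "\<And>x y. cmod (\<psi> x * \<psi> y - \<psi> (x * y)) \<le> d"
proof -
  have "0 \<le> defect \<psi>"
    using defect_le[of \<psi> undefined undefined] by (meson ereal_less_eq(5) norm_ge_zero order_trans)
  then obtain d where "defect \<psi> = ereal d" "d < 1/5"
    using assms by (cases "defect \<psi>") auto
  with defect_le[of \<psi>] show ?thesis by (intro that) auto
qed

context
  fixes \<psi> :: "'a::times \<Rightarrow> complex" and d :: real
  assumes idem: "\<And>x::'a. x * x = x"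
    and pointwise_defect: "\<And>x y. cmod (\<psi> x * \<psi> y - \<psi> (x * y)) \<le> d"
    and d_small: "d < 1/5"
begin

lemma value_almost_idempotent: "cmod (\<psi> e) * cmod (\<psi> e - 1) \<le> d"
proof -
  have "\<psi> e * \<psi> e - \<psi> e = \<psi> e * (\<psi> e - 1)" by (simp add: algebra_simps)
  thus ?thesis using pointwise_defect[of e e] idem[of e] by (simp add: norm_mult)
qed

lemma value_small_off_near_one:
  "\<not> cmod (\<psi> e - 1) < 7/25 \<Longrightarrow> cmod (\<psi> e) \<le> 7/5 * d"
  by (rule almost_idempotent_far_from_one[OF value_almost_idempotent d_small]) simp

lemma value_norm_lt: "cmod (\<psi> e) < 32/25"
  using near_one_norm_bounds(2)[of "\<psi> e"] value_small_off_near_one[of e] d_small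
  by (cases "cmod (\<psi> e - 1) < 7/25") auto

lemma near_one_mult_iff:
  "cmod (\<psi> (x * y) - 1) < 7/25 \<longleftrightarrow> cmod (\<psi> x - 1) < 7/25 \<and> cmod (\<psi> y - 1) < 7/25"
proof -
  have upper: "cmod (\<psi> (x * y)) \<le> cmod (\<psi> x) * cmod (\<psi> y) + d"
    using pointwise_defect[of x y] norm_triangle_ineq2[of "\<psi> (x * y)" "\<psi> x * \<psi> y"]
    by (simp add: norm_mult norm_minus_commute)
  have lower: "cmod (\<psi> x) * cmod (\<psi> y) \<le> cmod (\<psi> (x * y)) + d"
    using pointwise_defect[of x y] norm_triangle_ineq2[of "\<psi> x * \<psi> y" "\<psi> (x * y)"]
    by (simp add: norm_mult)
  have d0: "d \<ge> 0" using pointwise_defect[of x y] norm_ge_zero order_trans by blast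
  show ?thesis
  proof
    assume xy: "cmod (\<psi> (x * y) - 1) < 7/25"
    show "cmod (\<psi> x - 1) < 7/25 \<and> cmod (\<psi> y - 1) < 7/25"
    proof (rule ccontr)
      assume "\<not> ?thesis"
      hence "\<not> cmod (\<psi> x - 1) < 7/25 \<or> \<not> cmod (\<psi> y - 1) < 7/25" by blast
      hence "cmod (\<psi> x) * cmod (\<psi> y) \<le> 224/125 * d"
      proof
        assume "\<not> cmod (\<psi> x - 1) < 7/25"
        hence "cmod (\<psi> x) * cmod (\<psi> y) \<le> (7/5 * d) * (32/25)"
          using value_small_off_near_one[of x] value_norm_lt[of y] d0
          by (intro mult_mono) auto
        thus ?thesis by simp
      next
        assume "\<not> cmod (\<psi> y - 1) < 7/25"
        hence "cmod (\<psi> x) * cmod (\<psi> y) \<le> (32/25) * (7/5 * d)"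
          using value_small_off_near_one[of y] value_norm_lt[of x] d0
          by (intro mult_mono) auto
        thus ?thesis by simp
      qed
      thus False using upper near_one_norm_bounds(1)[OF xy] d_small by linarith
    qed
  next
    assume "cmod (\<psi> x - 1) < 7/25 \<and> cmod (\<psi> y - 1) < 7/25"
    hence "18/25 * (18/25) \<le> cmod (\<psi> x) * cmod (\<psi> y)"
      using near_one_norm_bounds(1) by (intro mult_mono) (auto intro: less_imp_le)
    thus "cmod (\<psi> (x * y) - 1) < 7/25"
      using lower value_small_off_near_one[of "x * y"] d_small by fastforce
  qed
qed

lemma close_to_indicator:
  "cmod (\<psi> e - (if cmod (\<psi> e - 1) < 7/25 then 1 else 0)) \<le> 7/5 * d"
  using almost_idempotent_near_one[OF value_almost_idempotent] value_small_off_near_one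
  by auto

end

theorem propositionp:
  fixes \<psi> :: "'a::ab_semigroup_mult \<Rightarrow> complex"
  assumes idem: "\<And>x::'a. x * x = x"
    and small: "defect \<psi> < ereal (1/5)"
  defines "S1 \<equiv> {e. cmod (\<psi> e - 1) < 7/25}"
  defines "chi \<equiv> (\<lambda>e. if e \<in> S1 then (1::complex) else 0)"
  shows "(\<forall>x y. chi (x * y) = chi x * chi y)
    \<and> (SUP e\<in>(UNIV::'a set). ereal (cmod (\<psi> e - chi e))) \<le> ereal (7/5) * defect \<psi>"
proof -
  obtain d where def_eq: "defect \<psi> = ereal d" and d_small: "d < 1/5"
    and pointwise: "\<And>x y. cmod (\<psi> x * \<psi> y - \<psi> (x * y)) \<le> d"
    using defect_real[OF small] by blast
  have "chi (x * y) = chi x * chi y" for x y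
    using near_one_mult_iff[of \<psi> d x y, OF idem pointwise d_small] by (simp add: chi_def S1_def)
  moreover have "(SUP e\<in>(UNIV::'a set). ereal (cmod (\<psi> e - chi e))) \<le> ereal (7/5 * d)"
    using close_to_indicator[of \<psi> d, OF idem pointwise d_small]
    by (intro SUP_least) (simp add: chi_def S1_def)
  ultimately show ?thesis by (simp add: def_eq)
qed

end
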